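(* Let $P:\mathcal{C}^{\mathrm{op}}\to\mathbf{Pos}$ be a universal slat-doctrine such that $\mathcal{C}$ has exponents. Then the unit $\iota:P\to P^{ex}$ of the existential completion preserves the universal structure: for all objects $A,B$ of $\mathcal{C}$, $\iota_A\circ\forall_{\mathrm{pr}_A}=\forall^{ex}_{\mathrm{pr}_A}\circ\iota_{A\times B}$ as maps $P(A\times B)\to P^{ex}(A)$, where $\mathrm{pr}_A:A\times B\to A$.
   Context: A slat-doctrine is a functor $P:\mathcal{C}^{\mathrm{op}}\to\mathbf{Pos}$ with $\mathcal{C}$ having finite products; $P_f$ is reindexing along $f$. It is universal if reindexing along each product projection has a right adjoint $\forall$ satisfying Beck–Chevalley (for every pullback of a projection $\mathrm{pr}:X\to A$ along $f:A'\to A$, with resulting projection $\mathrm{pr}'$ and $f':X'\to X$, $\forall_{\mathrm{pr}'}P_{f'}=P_f\forall_{\mathrm{pr}}$). Existential completion: $P^{ex}(A)$ is the poset (reflection) of triples $(A,B,\alpha)$, $\alpha\in P(A\times B)$, with $(A,B,\alpha)\le(A,C,\beta)$ iff some $f:A\times B\to C$ has $\alpha\le P_{\langle\mathrm{pr}_A,f\rangle}(\beta)$; $P^{ex}_f(C,D,\gamma)=(A,D,P_{f\times 1_D}(\gamma))$. When $P$ is universal and $\mathcal{C}$ has exponents, $P^{ex}$ is universal; $\forall^{ex}$ denotes the right adjoints of its reindexing along projections. The unit $\iota_A:P(A)\to P^{ex}(A)$ sends $\alpha$ to $(A,1,P_{\mathrm{pr}_A}(\alpha))$ with $\mathrm{pr}_A:A\times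 1\to A$. *)

theory Defs
  imports Main
begin

record ('o,'m) cat =
  Ob  :: "'o set"
  Arr :: "'m set"
  Dom :: "'m \<Rightarrow> 'o"
  Cod :: "'m \<Rightarrow> 'o"
  Comp :: "'m \<Rightarrow> 'm \<Rightarrow> 'm"   (* Comp C g f = g o f *)
  Idm :: "'o \<Rightarrow> 'm"

definition Hom :: "('o,'m,'z) cat_scheme \<Rightarrow> 'o \<Rightarrow> 'o \<Rightarrow> 'm set" where
  "Hom C A B = {f \<in> Arr C. Dom C f = A \<and> Cod C f = B}"

definition category :: "('o,'m,'z) cat_scheme \<Rightarrow> bool" where
  "category C \<longleftrightarrow>
     (\<forall>f\<in>Arr C. Dom C f \<in> Ob C \<and> Cod C f \<in> Ob C) \<and>
     (\<forall>A\<in>Ob C. Idm C A \<in> Hom C A A) \<and>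
     (\<forall>f\<in>Arr C. Comp C f (Idm C (Dom C f)) = f \<and> Comp C (Idm C (Cod C f)) f = f) \<and>
     (\<forall>f\<in>Arr C. \<forall>g\<in>Arr C. Cod C f = Dom C g \<longrightarrow> Comp C g f \<in> Hom C (Dom C f) (Cod C g)) \<and>
     (\<forall>f\<in>Arr C. \<forall>g\<in>Arr C. \<forall>h\<in>Arr C. Cod C f = Dom C g \<and> Cod C g = Dom C h \<longrightarrow>
        Comp C h (Comp C g f) = Comp C (Comp C h g) f)"

definition is_terminal :: "('o,'m,'z) cat_scheme \<Rightarrow> 'o \<Rightarrow> bool" where
  "is_terminal C T \<longleftrightarrow> T \<in> Ob C \<and> (\<forall>A\<in>Ob C. \<exists>!u. u \<in> Hom C A T)"

definition is_product :: "('o,'m,'z) cat_scheme \<Rightarrow> 'o \<Rightarrow> 'o \<Rightarrow> 'o \<Rightarrow> 'm \<Rightarrow> 'm \<Rightarrow> bool" where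
  "is_product C A B X p q \<longleftrightarrow> X \<in> Ob C \<and> p \<in> Hom C X A \<and> q \<in> Hom C X B \<and>
     (\<forall>Y\<in>Ob C. \<forall>g\<in>Hom C Y A. \<forall>h\<in>Hom C Y B.
        \<exists>!u. u \<in> Hom C Y X \<and> Comp C p u = g \<and> Comp C q u = h)"

definition is_projection :: "('o,'m,'z) cat_scheme \<Rightarrow> 'm \<Rightarrow> bool" where
  "is_projection C p \<longleftrightarrow> p \<in> Arr C \<and> (\<exists>B q. is_product C (Cod C p) B (Dom C p) p q)"

definition is_pullback :: "('o,'m,'z) cat_scheme \<Rightarrow> 'm \<Rightarrow> 'm \<Rightarrow> 'm \<Rightarrow> 'm \<Rightarrow> bool" where
  "is_pullback C p f p' f' \<longleftrightarrow>
     p \<in> Arr C \<and> f \<in> Arr C \<and> Cod C f = Cod C p \<and>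
     p' \<in> Hom C (Dom C p') (Dom C f) \<and> f' \<in> Hom C (Dom C p') (Dom C p) \<and>
     Comp C p f' = Comp C f p' \<and>
     (\<forall>Y\<in>Ob C. \<forall>g\<in>Hom C Y (Dom C f). \<forall>h\<in>Hom C Y (Dom C p).
        Comp C f g = Comp C p h \<longrightarrow>
        (\<exists>!u. u \<in> Hom C Y (Dom C p') \<and> Comp C p' u = g \<and> Comp C f' u = h))"

record ('o,'m) fpcat = "('o,'m) cat" +
  Term :: 'o
  Prod :: "'o \<Rightarrow> 'o \<Rightarrow> 'o"
  Pr1  :: "'o \<Rightarrow> 'o \<Rightarrow> 'm"
  Pr2  :: "'o \<Rightarrow> 'o \<Rightarrow> 'm"
  Pair :: "'m \<Rightarrow> 'm \<Rightarrow> 'm"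

definition finite_products :: "('o,'m,'z) fpcat_scheme \<Rightarrow> bool" where
  "finite_products C \<longleftrightarrow> category C \<and> is_terminal C (Term C) \<and>
     (\<forall>A\<in>Ob C. \<forall>B\<in>Ob C.
        is_product C A B (Prod C A B) (Pr1 C A B) (Pr2 C A B) \<and>
        (\<forall>Y\<in>Ob C. \<forall>g\<in>Hom C Y A. \<forall>h\<in>Hom C Y B.
           Pair C g h \<in> Hom C Y (Prod C A B) \<and>
           Comp C (Pr1 C A B) (Pair C g h) = g \<and> Comp C (Pr2 C A B) (Pair C g h) = h))"

definition times_id :: "('o,'m,'z) fpcat_scheme \<Rightarrow> 'm \<Rightarrow> 'o \<Rightarrow> 'm" where
  "times_id C f D = Pair C (Comp C f (Pr1 C (Dom C f) D)) (Pr2 C (Dom C f) D)"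

definition has_exponents :: "('o,'m,'z) fpcat_scheme \<Rightarrow> bool" where
  "has_exponents C \<longleftrightarrow>
     (\<forall>B\<in>Ob C. \<forall>D\<in>Ob C. \<exists>E\<in>Ob C. \<exists>ev\<in>Hom C (Prod C E B) D.
        \<forall>Y\<in>Ob C. \<forall>g\<in>Hom C (Prod C Y B) D.
          \<exists>!u. u \<in> Hom C Y E \<and> Comp C ev (times_id C u B) = g)"

record ('o,'m,'p) doctrine =
  PC :: "'o \<Rightarrow> 'p set"              (* underlying set of the poset P(A) *)
  Le :: "'o \<Rightarrow> 'p \<Rightarrow> 'p \<Rightarrow> bool"     (* order of P(A) *)
  Rx :: "'m \<Rightarrow> 'p \<Rightarrow> 'p"            (* reindexing P_f *)

definition slat_doctrine :: "('o,'m,'z) fpcat_scheme \<Rightarrow> ('o,'m,'p) doctrine \<Rightarrow> bool" where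
  "slat_doctrine C P \<longleftrightarrow> finite_products C \<and>
     (\<forall>A\<in>Ob C.
        (\<forall>x\<in>PC P A. Le P A x x) \<and>
        (\<forall>x\<in>PC P A. \<forall>y\<in>PC P A. \<forall>z\<in>PC P A. Le P A x y \<and> Le P A y z \<longrightarrow> Le P A x z) \<and>
        (\<forall>x\<in>PC P A. \<forall>y\<in>PC P A. Le P A x y \<and> Le P A y x \<longrightarrow> x = y)) \<and>
     (\<forall>f\<in>Arr C. \<forall>x\<in>PC P (Cod C f). Rx P f x \<in> PC P (Dom C f)) \<and>
     (\<forall>f\<in>Arr C. \<forall>x\<in>PC P (Cod C f). \<forall>y\<in>PC P (Cod C f).
        Le P (Cod C f) x y \<longrightarrow> Le P (Dom C f) (Rx P f x) (Rx P f y)) \<and>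
     (\<forall>A\<in>Ob C. \<forall>x\<in>PC P A. Rx P (Idm C A) x = x) \<and>
     (\<forall>f\<in>Arr C. \<forall>g\<in>Arr C. Cod C f = Dom C g \<longrightarrow>
        (\<forall>x\<in>PC P (Cod C g). Rx P (Comp C g f) x = Rx P f (Rx P g x)))"

definition right_adj :: "('o,'m,'z) fpcat_scheme \<Rightarrow> ('o,'m,'p) doctrine \<Rightarrow> 'm \<Rightarrow> ('p \<Rightarrow> 'p) \<Rightarrow> bool" where
  "right_adj C P p F \<longleftrightarrow>
     (\<forall>x\<in>PC P (Dom C p). F x \<in> PC P (Cod C p)) \<and>
     (\<forall>a\<in>PC P (Cod C p). \<forall>x\<in>PC P (Dom C p).
        Le P (Cod C p) a (F x) \<longleftrightarrow> Le P (Dom C p) (Rx P p a) x)"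

definition universal :: "('o,'m,'z) fpcat_scheme \<Rightarrow> ('o,'m,'p) doctrine \<Rightarrow> bool" where
  "universal C P \<longleftrightarrow> slat_doctrine C P \<and>
     (\<forall>p. is_projection C p \<longrightarrow> (\<exists>F. right_adj C P p F)) \<and>
     (\<forall>p f p' f' F F'. is_projection C p \<and> is_pullback C p f p' f' \<and>
        right_adj C P p F \<and> right_adj C P p' F' \<longrightarrow>
        (\<forall>x\<in>PC P (Dom C p). F' (Rx P f' x) = Rx P f (F x)))"

section \<open>Existential completion (on representatives; the poset is the reflection)\<close>

text \<open>An element (A,B,alpha) of P^ex(A) is represented by the pair (B, alpha).\<close>
definition PexC :: "('o,'m,'z) fpcat_scheme \<Rightarrow> ('o,'m,'p) doctrine \<Rightarrow> 'o \<Rightarrow> ('o \<times> 'p) set" where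
  "PexC C P A = {(B, \<alpha>). B \<in> Ob C \<and> \<alpha> \<in> PC P (Prod C A B)}"

definition ex_le :: "('o,'m,'z) fpcat_scheme \<Rightarrow> ('o,'m,'p) doctrine \<Rightarrow> 'o \<Rightarrow> 'o \<times> 'p \<Rightarrow> 'o \<times> 'p \<Rightarrow> bool" where
  "ex_le C P A x y \<longleftrightarrow>
     (\<exists>f\<in>Hom C (Prod C A (fst x)) (fst y).
        Le P (Prod C A (fst x)) (snd x) (Rx P (Pair C (Pr1 C A (fst x)) f) (snd y)))"

definition ex_eq :: "('o,'m,'z) fpcat_scheme \<Rightarrow> ('o,'m,'p) doctrine \<Rightarrow> 'o \<Rightarrow> 'o \<times> 'p \<Rightarrow> 'o \<times> 'p \<Rightarrow> bool" where
  "ex_eq C P A x y \<longleftrightarrow> ex_le C P A x y \<and> ex_le C P A y x"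

definition ex_rx :: "('o,'m,'z) fpcat_scheme \<Rightarrow> ('o,'m,'p) doctrine \<Rightarrow> 'm \<Rightarrow> 'o \<times> 'p \<Rightarrow> 'o \<times> 'p" where
  "ex_rx C P f y = (fst y, Rx P (times_id C f (fst y)) (snd y))"

definition ex_right_adj :: "('o,'m,'z) fpcat_scheme \<Rightarrow> ('o,'m,'p) doctrine \<Rightarrow> 'm \<Rightarrow> ('o \<times> 'p \<Rightarrow> 'o \<times> 'p) \<Rightarrow> bool" where
  "ex_right_adj C P p R \<longleftrightarrow>
     (\<forall>y\<in>PexC C P (Dom C p). R y \<in> PexC C P (Cod C p)) \<and>
     (\<forall>x\<in>PexC C P (Cod C p). \<forall>y\<in>PexC C P (Dom C p).
        ex_le C P (Cod C p) x (R y) \<longleftrightarrow> ex_le C P (Dom C p) (ex_rx C P p x) y)"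

definition iota :: "('o,'m,'z) fpcat_scheme \<Rightarrow> ('o,'m,'p) doctrine \<Rightarrow> 'o \<Rightarrow> 'p \<Rightarrow> 'o \<times> 'p" where
  "iota C P A \<alpha> = (Term C, Rx P (Pr1 C A (Term C)) \<alpha>)"

end

theory Submission
  imports Defs
begin

text \<open>
  Since \<iota> commutes with reindexing, \<iota>(\<forall>\<alpha>) \<le> \<forall>ex(\<iota>\<alpha>) is the transpose of the counit
  P_pr(\<forall>\<alpha>) \<le> \<alpha>. Conversely, let \<forall>ex(\<iota>\<alpha>) be represented by (E, \<gamma>), with \<gamma> over A \<times> E,
  and let \<pi> : A \<times> E \<rightarrow> A and pr' : (A \<times> E) \<times> B \<rightarrow> A \<times> E be the projections. The counit of
  the existential adjunction is P_(pr \<times> 1)(\<gamma>) \<le> \<alpha> over (A \<times> B) \<times> E; reindexed along the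
  isomorphism (A \<times> E) \<times> B \<cong> (A \<times> B) \<times> E it becomes P_pr'(\<gamma>) \<le> P_(\<pi> \<times> 1)(\<alpha>). Its
  transpose along pr' is \<gamma> \<le> \<forall>'(P_(\<pi> \<times> 1)(\<alpha>)) = P_\<pi>(\<forall>\<alpha>), the equation being
  Beck-Chevalley for the pullback of pr along \<pi>; and \<gamma> \<le> P_\<pi>(\<forall>\<alpha>) says (E, \<gamma>) \<le> \<iota>(\<forall>\<alpha>).
\<close>

text \<open>In elements: ((a, e), b) \<mapsto> ((a, b), e).\<close>

definition prod_exchange :: "('o,'m,'z) fpcat_scheme \<Rightarrow> 'o \<Rightarrow> 'o \<Rightarrow> 'o \<Rightarrow> 'm" where
  "prod_exchange C A E B =
     Pair C (times_id C (Pr1 C A E) B) (Comp C (Pr2 C A E) (Pr1 C (Prod C A E) B))"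

locale cartesian_category =
  fixes C :: "('o,'m,'z) fpcat_scheme"
  assumes finite_products: "finite_products C"
begin

lemma category: "category C"
  using finite_products by (simp add: finite_products_def)

lemma Hom_ObD: "f \<in> Hom C X Y \<Longrightarrow> X \<in> Ob C \<and> Y \<in> Ob C"
  using category by (auto simp: category_def Hom_def)

lemma Comp_in_Hom: "f \<in> Hom C X Y \<Longrightarrow> g \<in> Hom C Y Z \<Longrightarrow> Comp C g f \<in> Hom C X Z"
  using category unfolding category_def Hom_def by auto

lemma Comp_assoc:
  "f \<in> Hom C X Y \<Longrightarrow> g \<in> Hom C Y Z \<Longrightarrow> h \<in> Hom C Z W \<Longrightarrow>
   Comp C h (Comp C g f) = Comp C (Comp C h g) f"
  using category unfolding category_def Hom_def by auto

lemma Idm_in_Hom: "X \<in> Ob C \<Longrightarrow> Idm C X \<in> Hom C X X"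
  using category unfolding category_def by auto

lemma Comp_Idm_right: "f \<in> Hom C X Y \<Longrightarrow> Comp C f (Idm C X) = f"
  using category unfolding category_def Hom_def by auto

lemma Term_in_Ob: "Term C \<in> Ob C"
  using finite_products unfolding finite_products_def is_terminal_def by simp

lemma arrow_to_Term_exists: "X \<in> Ob C \<Longrightarrow> \<exists>u. u \<in> Hom C X (Term C)"
  using finite_products unfolding finite_products_def is_terminal_def by blast

lemma is_product_Prod:
  "A \<in> Ob C \<Longrightarrow> B \<in> Ob C \<Longrightarrow> is_product C A B (Prod C A B) (Pr1 C A B) (Pr2 C A B)"
  using finite_products unfolding finite_products_def by auto

lemma Prod_in_Ob: "A \<in> Ob C \<Longrightarrow> B \<in> Ob C \<Longrightarrow> Prod C A B \<in> Ob C"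
  using is_product_Prod by (simp add: is_product_def)

lemma Pr1_in_Hom: "A \<in> Ob C \<Longrightarrow> B \<in> Ob C \<Longrightarrow> Pr1 C A B \<in> Hom C (Prod C A B) A"
  using is_product_Prod by (simp add: is_product_def)

lemma Pr2_in_Hom: "A \<in> Ob C \<Longrightarrow> B \<in> Ob C \<Longrightarrow> Pr2 C A B \<in> Hom C (Prod C A B) B"
  using is_product_Prod by (simp add: is_product_def)

lemma
  assumes "g \<in> Hom C Y A" and "h \<in> Hom C Y B"
  shows Pair_in_Hom: "Pair C g h \<in> Hom C Y (Prod C A B)"
    and Pr1_comp_Pair: "Comp C (Pr1 C A B) (Pair C g h) = g"
    and Pr2_comp_Pair: "Comp C (Pr2 C A B) (Pair C g h) = h"
  using assms Hom_ObD[OF assms(1)] Hom_ObD[OF assms(2)] finite_products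
  unfolding finite_products_def by blast+

lemma Prod_arrow_eqI:
  assumes "A \<in> Ob C" "B \<in> Ob C" "u \<in> Hom C Y (Prod C A B)" "v \<in> Hom C Y (Prod C A B)"
    and "Comp C (Pr1 C A B) u = Comp C (Pr1 C A B) v"
    and "Comp C (Pr2 C A B) u = Comp C (Pr2 C A B) v"
  shows "u = v"
proof -
  have "Y \<in> Ob C" using Hom_ObD assms(3) by blast
  moreover have "Comp C (Pr1 C A B) u \<in> Hom C Y A" "Comp C (Pr2 C A B) u \<in> Hom C Y B"
    using assms Comp_in_Hom Pr1_in_Hom Pr2_in_Hom by blast+
  ultimately show ?thesis
    using is_product_Prod[OF assms(1,2)] assms(3-) unfolding is_product_def by metis
qed

lemma Pair_Pr1_Pr2:
  assumes "A \<in> Ob C" "B \<in> Ob C"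
  shows "Pair C (Pr1 C A B) (Pr2 C A B) = Idm C (Prod C A B)"
proof (rule Prod_arrow_eqI[OF assms])
  note pr = Pr1_in_Hom[OF assms] Pr2_in_Hom[OF assms]
  show "Pair C (Pr1 C A B) (Pr2 C A B) \<in> Hom C (Prod C A B) (Prod C A B)"
    using Pair_in_Hom[OF pr] .
  show "Idm C (Prod C A B) \<in> Hom C (Prod C A B) (Prod C A B)"
    using Idm_in_Hom Prod_in_Ob assms by blast
  show "Comp C (Pr1 C A B) (Pair C (Pr1 C A B) (Pr2 C A B)) = Comp C (Pr1 C A B) (Idm C (Prod C A B))"
    and "Comp C (Pr2 C A B) (Pair C (Pr1 C A B) (Pr2 C A B)) = Comp C (Pr2 C A B) (Idm C (Prod C A B))"
    using Pr1_comp_Pair[OF pr] Pr2_comp_Pair[OF pr] Comp_Idm_right pr by simp_all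
qed

lemma
  assumes f: "f \<in> Hom C X Y" and D: "D \<in> Ob C"
  shows times_id_in_Hom: "times_id C f D \<in> Hom C (Prod C X D) (Prod C Y D)"
    and Pr1_comp_times_id: "Comp C (Pr1 C Y D) (times_id C f D) = Comp C f (Pr1 C X D)"
    and Pr2_comp_times_id: "Comp C (Pr2 C Y D) (times_id C f D) = Pr2 C X D"
proof -
  have X: "X \<in> Ob C" and "Dom C f = X" using f Hom_ObD by (auto simp: Hom_def)
  then have "times_id C f D = Pair C (Comp C f (Pr1 C X D)) (Pr2 C X D)"
    by (simp add: times_id_def)
  moreover have "Comp C f (Pr1 C X D) \<in> Hom C (Prod C X D) Y"
    using Comp_in_Hom Pr1_in_Hom X D f by blast
  ultimately show "times_id C f D \<in> Hom C (Prod C X D) (Prod C Y D)"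
    and "Comp C (Pr1 C Y D) (times_id C f D) = Comp C f (Pr1 C X D)"
    and "Comp C (Pr2 C Y D) (times_id C f D) = Pr2 C X D"
    using Pair_in_Hom Pr1_comp_Pair Pr2_comp_Pair Pr2_in_Hom X D by auto
qed

lemma is_projection_Pr1: "A \<in> Ob C \<Longrightarrow> B \<in> Ob C \<Longrightarrow> is_projection C (Pr1 C A B)"
  using Pr1_in_Hom[of A B] is_product_Prod[of A B] unfolding is_projection_def Hom_def by auto

lemma is_pullback_Pr1_times_id:
  assumes f: "f \<in> Hom C X A" and B: "B \<in> Ob C"
  shows "is_pullback C (Pr1 C A B) f (Pr1 C X B) (times_id C f B)"
proof -
  have X: "X \<in> Ob C" and A: "A \<in> Ob C" using f Hom_ObD by blast+
  have univ: "\<exists>!u. u \<in> Hom C Y (Prod C X B) \<and> Comp C (Pr1 C X B) u = g \<and> Comp C (times_id C f B) u = h"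
    if g: "g \<in> Hom C Y X" and h: "h \<in> Hom C Y (Prod C A B)"
      and eq: "Comp C f g = Comp C (Pr1 C A B) h" for Y g h
  proof -
    let ?t = "times_id C f B"
    have ft: "?t \<in> Hom C (Prod C X B) (Prod C A B)"
      using times_id_in_Hom f B by blast
    have Pr1_t: "Comp C (Pr1 C A B) (Comp C ?t u) = Comp C f (Comp C (Pr1 C X B) u)"
      and Pr2_t: "Comp C (Pr2 C A B) (Comp C ?t u) = Comp C (Pr2 C X B) u"
      if "u \<in> Hom C Y (Prod C X B)" for u
      using that Comp_assoc[OF that ft] Comp_assoc[OF that Pr1_in_Hom[OF X B] f]
        Pr1_in_Hom[OF A B] Pr2_in_Hom[OF A B] Pr1_comp_times_id[OF f B] Pr2_comp_times_id[OF f B]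
      by metis+
    define u0 where "u0 = Pair C g (Comp C (Pr2 C A B) h)"
    have u0: "u0 \<in> Hom C Y (Prod C X B)" "Comp C (Pr1 C X B) u0 = g"
      "Comp C (Pr2 C X B) u0 = Comp C (Pr2 C A B) h"
      unfolding u0_def using g h Comp_in_Hom Pr2_in_Hom A B
      by (blast intro: Pair_in_Hom Pr1_comp_Pair Pr2_comp_Pair)+
    have "Comp C ?t u0 = h"
      using Prod_arrow_eqI[OF A B Comp_in_Hom[OF u0(1) ft] h] Pr1_t Pr2_t u0 eq by metis
    moreover have "u = u0"
      if "u \<in> Hom C Y (Prod C X B)" "Comp C (Pr1 C X B) u = g" "Comp C ?t u = h" for u
      using Prod_arrow_eqI[OF X B that(1) u0(1)] Pr2_t[OF that(1)] that u0 by metis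
    ultimately show ?thesis using u0 by blast
  qed
  have "Dom C (Pr1 C X B) = Prod C X B" "Cod C (Pr1 C X B) = X" "Dom C f = X" "Cod C f = A"
    "f \<in> Arr C" "Pr1 C A B \<in> Arr C" "Cod C (Pr1 C A B) = A" "Dom C (Pr1 C A B) = Prod C A B"
    using f Pr1_in_Hom[OF X B] Pr1_in_Hom[OF A B] by (auto simp: Hom_def)
  then show ?thesis
    unfolding is_pullback_def
    using Pr1_in_Hom[OF X B] times_id_in_Hom[OF f B] Pr1_comp_times_id[OF f B] univ
    by simp
qed

lemma
  assumes A: "A \<in> Ob C" and E: "E \<in> Ob C" and B: "B \<in> Ob C"
  shows prod_exchange_in_Hom:
      "prod_exchange C A E B \<in> Hom C (Prod C (Prod C A E) B) (Prod C (Prod C A B) E)"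
    and Pr1_comp_prod_exchange:
      "Comp C (Pr1 C (Prod C A B) E) (prod_exchange C A E B) = times_id C (Pr1 C A E) B"
    and times_id_comp_prod_exchange:
      "Comp C (times_id C (Pr1 C A B) E) (prod_exchange C A E B) = Pr1 C (Prod C A E) B"
proof -
  let ?s = "prod_exchange C A E B"
  have AE: "Prod C A E \<in> Ob C" and AB: "Prod C A B \<in> Ob C" using Prod_in_Ob A B E by blast+
  note Q1 = Pr1_in_Hom[OF AE B] and pi = Pr1_in_Hom[OF A E] and eps = Pr2_in_Hom[OF A E]
  note pr = Pr1_in_Hom[OF A B] and P1 = Pr1_in_Hom[OF AB E]
  have pi_B: "times_id C (Pr1 C A E) B \<in> Hom C (Prod C (Prod C A E) B) (Prod C A B)"
    using times_id_in_Hom[OF pi B] .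
  have "Comp C (Pr2 C A E) (Pr1 C (Prod C A E) B) \<in> Hom C (Prod C (Prod C A E) B) E"
    using Comp_in_Hom[OF Q1 eps] .
  note s = Pair_in_Hom[OF pi_B this] Pr1_comp_Pair[OF pi_B this] Pr2_comp_Pair[OF pi_B this]
  show s_Hom: "?s \<in> Hom C (Prod C (Prod C A E) B) (Prod C (Prod C A B) E)"
    and P1_s: "Comp C (Pr1 C (Prod C A B) E) ?s = times_id C (Pr1 C A E) B"
    using s by (simp_all add: prod_exchange_def)
  have P2_s: "Comp C (Pr2 C (Prod C A B) E) ?s = Comp C (Pr2 C A E) (Pr1 C (Prod C A E) B)"
    using s by (simp add: prod_exchange_def)
  note t = times_id_in_Hom[OF pr E]
  show "Comp C (times_id C (Pr1 C A B) E) ?s = Pr1 C (Prod C A E) B"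
  proof (rule Prod_arrow_eqI[OF A E Comp_in_Hom[OF s_Hom t] Q1])
    have "Comp C (Pr1 C A E) (Comp C (times_id C (Pr1 C A B) E) ?s)
        = Comp C (Comp C (Pr1 C A B) (Pr1 C (Prod C A B) E)) ?s"
      using Comp_assoc[OF s_Hom t pi] Pr1_comp_times_id[OF pr E] by simp
    also have "\<dots> = Comp C (Pr1 C A B) (times_id C (Pr1 C A E) B)"
      using Comp_assoc[OF s_Hom P1 pr] P1_s by simp
    also have "\<dots> = Comp C (Pr1 C A E) (Pr1 C (Prod C A E) B)"
      using Pr1_comp_times_id[OF pi B] .
    finally show "Comp C (Pr1 C A E) (Comp C (times_id C (Pr1 C A B) E) ?s)
        = Comp C (Pr1 C A E) (Pr1 C (Prod C A E) B)" .
    show "Comp C (Pr2 C A E) (Comp C (times_id C (Pr1 C A B) E) ?s)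
        = Comp C (Pr2 C A E) (Pr1 C (Prod C A E) B)"
      using Comp_assoc[OF s_Hom t eps] Pr2_comp_times_id[OF pr E] P2_s by simp
  qed
qed

end

locale slat =
  fixes C :: "('o,'m,'z) fpcat_scheme" and P :: "('o,'m,'p) doctrine"
  assumes slat_doctrine: "slat_doctrine C P"

sublocale slat \<subseteq> cartesian_category C
  using slat_doctrine by unfold_locales (simp add: slat_doctrine_def)

context slat
begin

lemma Rx_in_PC: "f \<in> Hom C X Y \<Longrightarrow> x \<in> PC P Y \<Longrightarrow> Rx P f x \<in> PC P X"
  using slat_doctrine unfolding slat_doctrine_def Hom_def by auto

lemma Rx_mono:
  "f \<in> Hom C X Y \<Longrightarrow> x \<in> PC P Y \<Longrightarrow> y \<in> PC P Y \<Longrightarrow> Le P Y x y \<Longrightarrow> Le P X (Rx P f x) (Rx P f y)"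
  using slat_doctrine unfolding slat_doctrine_def Hom_def by auto

lemma Rx_Idm: "X \<in> Ob C \<Longrightarrow> x \<in> PC P X \<Longrightarrow> Rx P (Idm C X) x = x"
  using slat_doctrine unfolding slat_doctrine_def by auto

lemma Rx_Comp:
  "f \<in> Hom C X Y \<Longrightarrow> g \<in> Hom C Y Z \<Longrightarrow> x \<in> PC P Z \<Longrightarrow> Rx P (Comp C g f) x = Rx P f (Rx P g x)"
  using slat_doctrine unfolding slat_doctrine_def Hom_def by auto

lemma Le_refl: "X \<in> Ob C \<Longrightarrow> x \<in> PC P X \<Longrightarrow> Le P X x x"
  using slat_doctrine unfolding slat_doctrine_def by auto

lemma right_adj_counit:
  assumes "right_adj C P p F" "p \<in> Hom C X A" "x \<in> PC P X"
  shows "Le P X (Rx P p (F x)) x"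
proof -
  have "Dom C p = X" "Cod C p = A" "A \<in> Ob C" using assms(2) Hom_ObD by (auto simp: Hom_def)
  moreover have "F x \<in> PC P A" using assms(1,3) calculation by (simp add: right_adj_def)
  ultimately show ?thesis using assms(1,3) Le_refl[of A "F x"] unfolding right_adj_def by simp
qed

lemma iota_in_PexC: "A \<in> Ob C \<Longrightarrow> a \<in> PC P A \<Longrightarrow> iota C P A a \<in> PexC C P A"
  unfolding iota_def PexC_def using Term_in_Ob Rx_in_PC[OF Pr1_in_Hom] by auto

lemma ex_le_refl:
  assumes "A \<in> Ob C" "x \<in> PexC C P A"
  shows "ex_le C P A x x"
proof -
  obtain B \<beta> where x: "x = (B, \<beta>)" "B \<in> Ob C" "\<beta> \<in> PC P (Prod C A B)"
    using assms(2) by (auto simp: PexC_def)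
  have "Le P (Prod C A B) \<beta> (Rx P (Pair C (Pr1 C A B) (Pr2 C A B)) \<beta>)"
    using Pair_Pr1_Pr2 Rx_Idm Le_refl Prod_in_Ob assms(1) x by simp
  then show ?thesis
    unfolding ex_le_def x using Pr2_in_Hom assms(1) x by auto
qed

lemma ex_right_adj_counit:
  assumes "ex_right_adj C P p R" "p \<in> Hom C X A" "y \<in> PexC C P X"
  shows "ex_le C P X (ex_rx C P p (R y)) y"
proof -
  have "Dom C p = X" "Cod C p = A" "A \<in> Ob C" using assms(2) Hom_ObD by (auto simp: Hom_def)
  moreover have "R y \<in> PexC C P A" using assms(1,3) calculation by (simp add: ex_right_adj_def)
  ultimately show ?thesis using assms(1,3) ex_le_refl[of A "R y"] unfolding ex_right_adj_def by simp
qed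

lemma ex_rx_iota:
  assumes f: "f \<in> Hom C X Y" and a: "a \<in> PC P Y"
  shows "ex_rx C P f (iota C P Y a) = iota C P X (Rx P f a)"
proof -
  have X: "X \<in> Ob C" and Y: "Y \<in> Ob C" using f Hom_ObD by blast+
  note T = Term_in_Ob
  have "Rx P (times_id C f (Term C)) (Rx P (Pr1 C Y (Term C)) a)
      = Rx P (Comp C (Pr1 C Y (Term C)) (times_id C f (Term C))) a"
    using Rx_Comp[OF times_id_in_Hom[OF f T] Pr1_in_Hom[OF Y T] a] ..
  also have "\<dots> = Rx P (Comp C f (Pr1 C X (Term C))) a"
    using Pr1_comp_times_id[OF f T] by simp
  also have "\<dots> = Rx P (Pr1 C X (Term C)) (Rx P f a)"
    using Rx_Comp[OF Pr1_in_Hom[OF X T] f a] .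
  finally show ?thesis by (simp add: ex_rx_def iota_def)
qed

lemma ex_le_iota_iff:
  assumes A: "A \<in> Ob C" and E: "E \<in> Ob C" and a: "a \<in> PC P A"
  shows "ex_le C P A (E, \<gamma>) (iota C P A a) \<longleftrightarrow> Le P (Prod C A E) \<gamma> (Rx P (Pr1 C A E) a)"
proof -
  note T = Term_in_Ob
  have "Rx P (Pair C (Pr1 C A E) k) (Rx P (Pr1 C A (Term C)) a) = Rx P (Pr1 C A E) a"
    if k: "k \<in> Hom C (Prod C A E) (Term C)" for k
    using Rx_Comp[OF Pair_in_Hom[OF Pr1_in_Hom[OF A E] k] Pr1_in_Hom[OF A T] a]
      Pr1_comp_Pair[OF Pr1_in_Hom[OF A E] k] by simp
  moreover obtain k where "k \<in> Hom C (Prod C A E) (Term C)"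
    using arrow_to_Term_exists Prod_in_Ob A E by blast
  ultimately show ?thesis
    unfolding ex_le_def iota_def by auto
qed

lemma iota_mono:
  assumes "A \<in> Ob C" "a \<in> PC P A" "b \<in> PC P A" "Le P A a b"
  shows "ex_le C P A (iota C P A a) (iota C P A b)"
  using assms ex_le_iota_iff[OF assms(1) Term_in_Ob] Rx_mono[OF Pr1_in_Hom[OF assms(1) Term_in_Ob]]
  by (simp add: iota_def)

lemma Le_Rx_prod_exchange:
  assumes A: "A \<in> Ob C" and B: "B \<in> Ob C" and E: "E \<in> Ob C"
    and \<gamma>: "\<gamma> \<in> PC P (Prod C A E)" and \<alpha>: "\<alpha> \<in> PC P (Prod C A B)"
    and le: "Le P (Prod C (Prod C A B) E)
      (Rx P (times_id C (Pr1 C A B) E) \<gamma>) (Rx P (Pr1 C (Prod C A B) E) \<alpha>)"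
  shows "Le P (Prod C (Prod C A E) B)
      (Rx P (Pr1 C (Prod C A E) B) \<gamma>) (Rx P (times_id C (Pr1 C A E) B) \<alpha>)"
proof -
  let ?s = "prod_exchange C A E B"
  note s = prod_exchange_in_Hom[OF A E B]
  have AB: "Prod C A B \<in> Ob C" using Prod_in_Ob A B by blast
  note t = times_id_in_Hom[OF Pr1_in_Hom[OF A B] E] and P1 = Pr1_in_Hom[OF AB E]
  have "Rx P (Pr1 C (Prod C A E) B) \<gamma> = Rx P ?s (Rx P (times_id C (Pr1 C A B) E) \<gamma>)"
    using Rx_Comp[OF s t \<gamma>] times_id_comp_prod_exchange[OF A E B] by simp
  also have "Le P (Prod C (Prod C A E) B) \<dots> (Rx P ?s (Rx P (Pr1 C (Prod C A B) E) \<alpha>))"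
    using Rx_mono[OF s Rx_in_PC[OF t \<gamma>] Rx_in_PC[OF P1 \<alpha>] le] .
  also have "Rx P ?s (Rx P (Pr1 C (Prod C A B) E) \<alpha>) = Rx P (times_id C (Pr1 C A E) B) \<alpha>"
    using Rx_Comp[OF s P1 \<alpha>] Pr1_comp_prod_exchange[OF A E B] by simp
  finally show ?thesis .
qed

lemma iota_right_adj_le:
  assumes F: "right_adj C P p F" and R: "ex_right_adj C P p R"
    and p: "p \<in> Hom C X A" and \<alpha>: "\<alpha> \<in> PC P X"
  shows "ex_le C P A (iota C P A (F \<alpha>)) (R (iota C P X \<alpha>))"
proof -
  have dp: "Dom C p = X" "Cod C p = A" and X: "X \<in> Ob C" and A: "A \<in> Ob C"
    using p Hom_ObD by (auto simp: Hom_def)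
  have F\<alpha>: "F \<alpha> \<in> PC P A" using F \<alpha> dp by (simp add: right_adj_def)
  have "ex_le C P X (iota C P X (Rx P p (F \<alpha>))) (iota C P X \<alpha>)"
    using iota_mono[OF X Rx_in_PC[OF p F\<alpha>] \<alpha> right_adj_counit[OF F p \<alpha>]] .
  then show ?thesis
    using R iota_in_PexC[OF A F\<alpha>] iota_in_PexC[OF X \<alpha>] ex_rx_iota[OF p F\<alpha>] dp
    unfolding ex_right_adj_def by simp
qed

end

locale universal_slat = slat +
  assumes universal: "universal C P"
begin

lemma Beck_Chevalley_Pr1:
  assumes f: "f \<in> Hom C X A" and B: "B \<in> Ob C"
    and F: "right_adj C P (Pr1 C A B) F" and F': "right_adj C P (Pr1 C X B) F'"
    and \<alpha>: "\<alpha> \<in> PC P (Prod C A B)"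
  shows "F' (Rx P (times_id C f B) \<alpha>) = Rx P f (F \<alpha>)"
proof -
  have "A \<in> Ob C" using f Hom_ObD by blast
  then have "Dom C (Pr1 C A B) = Prod C A B" and "is_projection C (Pr1 C A B)"
    using Pr1_in_Hom is_projection_Pr1 B by (auto simp: Hom_def)
  moreover note BC = universal[unfolded universal_def, THEN conjunct2, THEN conjunct2, rule_format]
  ultimately show ?thesis
    using BC[of "Pr1 C A B" f "Pr1 C X B" "times_id C f B" F F'] is_pullback_Pr1_times_id[OF f B]
      F F' \<alpha> by simp
qed

lemma Le_Rx_right_adjI:
  assumes f: "f \<in> Hom C X A" and B: "B \<in> Ob C" and F: "right_adj C P (Pr1 C A B) F"
    and \<gamma>: "\<gamma> \<in> PC P X" and \<alpha>: "\<alpha> \<in> PC P (Prod C A B)"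
    and le: "Le P (Prod C X B) (Rx P (Pr1 C X B) \<gamma>) (Rx P (times_id C f B) \<alpha>)"
  shows "Le P X \<gamma> (Rx P f (F \<alpha>))"
proof -
  have X: "X \<in> Ob C" using f Hom_ObD by blast
  obtain F' where F': "right_adj C P (Pr1 C X B) F'"
    using universal is_projection_Pr1[OF X B] unfolding universal_def by auto
  have "Dom C (Pr1 C X B) = Prod C X B" "Cod C (Pr1 C X B) = X"
    using Pr1_in_Hom[OF X B] by (auto simp: Hom_def)
  then have "Le P X \<gamma> (F' (Rx P (times_id C f B) \<alpha>))"
    using F' \<gamma> le Rx_in_PC[OF times_id_in_Hom[OF f B] \<alpha>] unfolding right_adj_def by simp
  then show ?thesis
    using Beck_Chevalley_Pr1[OF f B F F' \<alpha>] by simp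
qed

lemma ex_right_adj_le_iota:
  assumes A: "A \<in> Ob C" and B: "B \<in> Ob C"
    and F: "right_adj C P (Pr1 C A B) F" and R: "ex_right_adj C P (Pr1 C A B) R"
    and \<alpha>: "\<alpha> \<in> PC P (Prod C A B)"
  shows "ex_le C P A (R (iota C P (Prod C A B) \<alpha>)) (iota C P A (F \<alpha>))"
proof -
  note pr = Pr1_in_Hom[OF A B]
  have AB: "Prod C A B \<in> Ob C" using Prod_in_Ob A B by blast
  have dpr: "Dom C (Pr1 C A B) = Prod C A B" "Cod C (Pr1 C A B) = A"
    using pr by (auto simp: Hom_def)
  have "R (iota C P (Prod C A B) \<alpha>) \<in> PexC C P A"
    using R iota_in_PexC[OF AB \<alpha>] dpr unfolding ex_right_adj_def by simp
  then obtain E \<gamma> where R\<alpha>: "R (iota C P (Prod C A B) \<alpha>) = (E, \<gamma>)"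
    and E: "E \<in> Ob C" and \<gamma>: "\<gamma> \<in> PC P (Prod C A E)"
    unfolding PexC_def by auto
  have "ex_le C P (Prod C A B) (ex_rx C P (Pr1 C A B) (E, \<gamma>)) (iota C P (Prod C A B) \<alpha>)"
    using ex_right_adj_counit[OF R pr iota_in_PexC[OF AB \<alpha>]] R\<alpha> by simp
  then have "Le P (Prod C (Prod C A B) E)
      (Rx P (times_id C (Pr1 C A B) E) \<gamma>) (Rx P (Pr1 C (Prod C A B) E) \<alpha>)"
    using ex_le_iota_iff[OF AB E \<alpha>] by (simp add: ex_rx_def)
  then have "Le P (Prod C (Prod C A E) B)
      (Rx P (Pr1 C (Prod C A E) B) \<gamma>) (Rx P (times_id C (Pr1 C A E) B) \<alpha>)"
    using Le_Rx_prod_exchange[OF A B E \<gamma> \<alpha>] by blast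
  then have "Le P (Prod C A E) \<gamma> (Rx P (Pr1 C A E) (F \<alpha>))"
    using Le_Rx_right_adjI[OF Pr1_in_Hom[OF A E] B F \<gamma> \<alpha>] by blast
  moreover have "F \<alpha> \<in> PC P A"
    using F \<alpha> dpr by (simp add: right_adj_def)
  ultimately show ?thesis
    using R\<alpha> ex_le_iota_iff[OF A E] by simp
qed

end

text \<open>
  Exponents are what make \<forall>ex exist.
\<close>

theorem lemma1:
  fixes C :: "('o,'m,'z) fpcat_scheme" and P :: "('o,'m,'p) doctrine"
  assumes "universal C P"
    and "has_exponents C"
    and "A \<in> Ob C" and "B \<in> Ob C"
    and "right_adj C P (Pr1 C A B) Fa"
    and "ex_right_adj C P (Pr1 C A B) Fex"
  shows "\<forall>\<alpha>\<in>PC P (Prod C A B).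
           ex_eq C P A (iota C P A (Fa \<alpha>)) (Fex (iota C P (Prod C A B) \<alpha>))"
proof
  fix \<alpha> assume \<alpha>: "\<alpha> \<in> PC P (Prod C A B)"
  interpret universal_slat C P
    using assms(1) by unfold_locales (simp_all add: universal_def)
  have pr: "Pr1 C A B \<in> Hom C (Prod C A B) A"
    using Pr1_in_Hom assms(3,4) .
  show "ex_eq C P A (iota C P A (Fa \<alpha>)) (Fex (iota C P (Prod C A B) \<alpha>))"
    unfolding ex_eq_def
    using iota_right_adj_le[OF assms(5,6) pr \<alpha>] ex_right_adj_le_iota[OF assms(3-6) \<alpha>] by blast
qed

end
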